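(* If $(f_m)$ is a Bessel sequence in $\mathcal{L}^2(I)$, then $(f_m*_T0)$ is also a Bessel sequence in $\mathcal{L}^2(I)$.
   Context: Let $N\ge 2$, $I=[x_0,x_N]$, $\Delta: x_0<\dots<x_N$ a partition, $L_n(x)=a_nx+b_n$ affine with $L_n(x_0)=x_{n-1}$, $L_n(x_N)=x_n$, $I_1=[x_0,x_1]$, $I_n=(x_{n-1},x_n]$ for $n\ge2$, and $\alpha=(\alpha_1,\dots,\alpha_N)\in(\mathcal{L}^\infty(I))^N$ with $\Lambda:=\operatorname{ess\,sup}\{|\alpha_n(x)|:x\in I,n=1,\dots,N\}<1$. For $f,b\in\mathcal{L}^2(I)$, $f*_Tb$ is the unique fixed point in $\mathcal{L}^2(I)$ of the contraction $Tg(x):=f(x)+\alpha_n(L_n^{-1}(x))(g-b)(L_n^{-1}(x))$, $x\in I_n$; $0$ is the null function. $(f_m)$ is Bessel if there is $B>0$ with $\sum_m|\langle g,f_m\rangle|^2\le B\|g\|_2^2$ for all $g$. *)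

theory Defs
  imports "HOL-Analysis.Analysis"
begin

text \<open>Affine maps L_n y = a n * y + c n.  Real-valued L^2(I) is modelled by
  square-integrable functions real => real on I; equality in L^2 is a.e. equality.\<close>

definition Ipart :: "(nat \<Rightarrow> real) \<Rightarrow> nat \<Rightarrow> real set" where
  "Ipart xs n = (if n = 1 then {xs 0 .. xs 1} else {xs (n - 1) <.. xs n})"

definition L2 :: "real set \<Rightarrow> (real \<Rightarrow> real) \<Rightarrow> bool" where
  "L2 S g \<longleftrightarrow> g \<in> borel_measurable (lebesgue_on S) \<and> integrable (lebesgue_on S) (\<lambda>x. (g x)\<^sup>2)"

definition L2inner :: "real set \<Rightarrow> (real \<Rightarrow> real) \<Rightarrow> (real \<Rightarrow> real) \<Rightarrow> real" where
  "L2inner S g h = (LINT x|lebesgue_on S. g x * h x)"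

definition Bessel :: "real set \<Rightarrow> (nat \<Rightarrow> real \<Rightarrow> real) \<Rightarrow> bool" where
  "Bessel S fs \<longleftrightarrow> (\<exists>B>0. \<forall>g. L2 S g \<longrightarrow>
      summable (\<lambda>m. (L2inner S g (fs m))\<^sup>2) \<and>
      (\<Sum>m. (L2inner S g (fs m))\<^sup>2) \<le> B * L2inner S g g)"

definition Top :: "nat \<Rightarrow> (nat \<Rightarrow> real) \<Rightarrow> (nat \<Rightarrow> real) \<Rightarrow> (nat \<Rightarrow> real) \<Rightarrow>
    (nat \<Rightarrow> real \<Rightarrow> real) \<Rightarrow> (real \<Rightarrow> real) \<Rightarrow> (real \<Rightarrow> real) \<Rightarrow> (real \<Rightarrow> real) \<Rightarrow> real \<Rightarrow> real" where
  "Top N xs a c \<alpha> f b g y = f y + (\<Sum>n\<in>{1..N}. indicator (Ipart xs n) y *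
      (\<alpha> n ((y - c n) / a n) * (g ((y - c n) / a n) - b ((y - c n) / a n))))"

text \<open>f *_T b: the (a.e.-unique) fixed point of T in L^2(I).\<close>
definition fractal :: "nat \<Rightarrow> (nat \<Rightarrow> real) \<Rightarrow> (nat \<Rightarrow> real) \<Rightarrow> (nat \<Rightarrow> real) \<Rightarrow>
    (nat \<Rightarrow> real \<Rightarrow> real) \<Rightarrow> (real \<Rightarrow> real) \<Rightarrow> (real \<Rightarrow> real) \<Rightarrow> real \<Rightarrow> real" where
  "fractal N xs a c \<alpha> f b = (SOME g. L2 {xs 0 .. xs N} g \<and>
      (AE y in lebesgue_on {xs 0 .. xs N}. g y = Top N xs a c \<alpha> f b g y))"

end

theory Submission
  imports Defs
begin

(*
  With b = 0 the operator T is g |-> f + A g, where A u = alpha_n (u o L_n^-1) on I_n is linear.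
  The slopes a_n of the L_n add up to 1, so a change of variables on each I_n gives
  ||A u|| <= Lambda ||u|| in L^2(I).  Hence the Neumann series sum_k A^k f converges a.e.
  to a fixed point of T, and every fixed point g satisfies ||g|| <= ||f|| / (1 - Lambda).
  By linearity of A, sum_m c_m (f_m *_T 0) is a fixed point for sum_m c_m f_m, so the
  synthesis inequality ||sum_m c_m f_m||^2 <= B sum_m c_m^2, which characterises Bessel
  sequences with bound B, passes to (f_m *_T 0) with bound B / (1 - Lambda)^2.
*)

section \<open>Square-integrable functions\<close>

definition square_integrable :: "'a measure \<Rightarrow> ('a \<Rightarrow> real) \<Rightarrow> bool" where
  "square_integrable M u \<longleftrightarrow> u \<in> borel_measurable M \<and> integrable M (\<lambda>x. (u x)\<^sup>2)"

definition norm_L2 :: "'a measure \<Rightarrow> ('a \<Rightarrow> real) \<Rightarrow> real" where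
  "norm_L2 M u = sqrt (LINT x|M. (u x)\<^sup>2)"

lemma L2_iff_square_integrable: "L2 S u \<longleftrightarrow> square_integrable (lebesgue_on S) u"
  by (simp add: L2_def square_integrable_def)

lemma square_integrable_integrable_mult:
  assumes "square_integrable M u" "square_integrable M v"
  shows "integrable M (\<lambda>x. u x * v x)"
proof -
  have [measurable]: "u \<in> borel_measurable M" "v \<in> borel_measurable M"
    using assms by (auto simp: square_integrable_def)
  have bound: "\<bar>p * q\<bar> \<le> p\<^sup>2 + q\<^sup>2" for p q :: real
  proof -
    have "2 * \<bar>p * q\<bar> \<le> p\<^sup>2 + q\<^sup>2"
      using sum_squares_bound[of "\<bar>p\<bar>" "\<bar>q\<bar>"] by (simp add: abs_mult)
    then show ?thesis by simp
  qed
  have "integrable M (\<lambda>x. (u x)\<^sup>2 + (v x)\<^sup>2)"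
    using assms by (auto simp: square_integrable_def)
  then show ?thesis
  proof (rule Bochner_Integration.integrable_bound)
    show "AE x in M. norm (u x * v x) \<le> norm ((u x)\<^sup>2 + (v x)\<^sup>2)"
      using bound by (intro AE_I2) simp
  qed measurable
qed

lemma square_integrable_add:
  assumes "square_integrable M u" "square_integrable M v"
  shows "square_integrable M (\<lambda>x. u x + v x)"
proof -
  have "integrable M (\<lambda>x. (u x)\<^sup>2 + (v x)\<^sup>2 + 2 * (u x * v x))"
    using assms square_integrable_integrable_mult[OF assms]
    by (intro Bochner_Integration.integrable_add integrable_mult_right) (auto simp: square_integrable_def)
  then show ?thesis
    using assms by (auto simp: square_integrable_def power2_sum algebra_simps)
qed

lemma square_integrable_cmult:
  "square_integrable M u \<Longrightarrow> square_integrable M (\<lambda>x. r * u x)"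
  by (auto simp: square_integrable_def power_mult_distrib)

lemma square_integrable_abs:
  "square_integrable M u \<Longrightarrow> square_integrable M (\<lambda>x. \<bar>u x\<bar>)"
  by (auto simp: square_integrable_def)

lemma square_integrable_sum:
  "finite A \<Longrightarrow> (\<And>i. i \<in> A \<Longrightarrow> square_integrable M (u i)) \<Longrightarrow>
    square_integrable M (\<lambda>x. \<Sum>i\<in>A. u i x)"
proof (induction A rule: finite_induct)
  case empty
  then show ?case by (simp add: square_integrable_def)
qed (simp add: square_integrable_add)

lemma square_integrable_iff_nn_integral:
  "u \<in> borel_measurable M \<Longrightarrow>
    square_integrable M u \<longleftrightarrow> (\<integral>\<^sup>+x. ennreal ((u x)\<^sup>2) \<partial>M) < \<infinity>"
  by (simp add: square_integrable_def integrable_iff_bounded)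

lemma nn_integral_square_eq_norm_L2:
  "square_integrable M u \<Longrightarrow> (\<integral>\<^sup>+x. ennreal ((u x)\<^sup>2) \<partial>M) = ennreal ((norm_L2 M u)\<^sup>2)"
  by (simp add: norm_L2_def square_integrable_def nn_integral_eq_integral)

lemma norm_L2_nonneg [simp]: "0 \<le> norm_L2 M u"
  by (simp add: norm_L2_def)

lemma norm_L2_square: "(norm_L2 M u)\<^sup>2 = (LINT x|M. (u x)\<^sup>2)"
  by (simp add: norm_L2_def)

lemma norm_L2_abs [simp]: "norm_L2 M (\<lambda>x. \<bar>u x\<bar>) = norm_L2 M u"
  by (simp add: norm_L2_def)

lemma norm_L2_cong_AE:
  "u \<in> borel_measurable M \<Longrightarrow> v \<in> borel_measurable M \<Longrightarrow> AE x in M. u x = v x \<Longrightarrow>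
    norm_L2 M u = norm_L2 M v"
  unfolding norm_L2_def by (subst integral_cong_AE[where g="\<lambda>x. (v x)\<^sup>2"]) auto

lemma discrim_le_of_quadratic_nonneg:
  fixes A B C :: real
  assumes "0 \<le> B" and "\<And>t. 0 \<le> A - 2 * t * C + t\<^sup>2 * B"
  shows "C\<^sup>2 \<le> A * B"
proof (cases "B = 0")
  case True
  have "C = 0"
  proof (rule ccontr)
    assume "C \<noteq> 0"
    have "0 \<le> A - 2 * ((A + 1) / (2 * C)) * C"
      using assms(2)[of "(A + 1) / (2 * C)"] True by simp
    also have "\<dots> = -1"
      using \<open>C \<noteq> 0\<close> by (simp add: field_simps)
    finally show False by simp
  qed
  then show ?thesis using True by simp
next
  case False
  with assms(1) have "0 < B" by simp
  have "0 \<le> A - 2 * (C / B) * C + (C / B)\<^sup>2 * B" by (rule assms(2))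
  also have "\<dots> = (A * B - C\<^sup>2) / B"
    using \<open>0 < B\<close> by (simp add: field_simps power2_eq_square)
  finally show ?thesis
    using \<open>0 < B\<close> by (simp add: zero_le_divide_iff)
qed

lemma integral_mult_le_norm_L2:
  assumes u: "square_integrable M u" and v: "square_integrable M v"
  shows "(LINT x|M. u x * v x) \<le> norm_L2 M u * norm_L2 M v"
proof -
  have [simp]: "integrable M (\<lambda>x. (u x)\<^sup>2)" "integrable M (\<lambda>x. (v x)\<^sup>2)"
    "integrable M (\<lambda>x. u x * v x)"
    using u v square_integrable_integrable_mult[OF u v] by (auto simp: square_integrable_def)
  have quadratic_nonneg:
    "0 \<le> (LINT x|M. (u x)\<^sup>2) - 2 * t * (LINT x|M. u x * v x) + t\<^sup>2 * (LINT x|M. (v x)\<^sup>2)" for t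
  proof -
    have "0 \<le> (LINT x|M. (u x - t * v x)\<^sup>2)" by simp
    also have "\<dots> = (LINT x|M. (u x)\<^sup>2 - 2 * t * (u x * v x) + t\<^sup>2 * (v x)\<^sup>2)"
      by (simp add: power2_eq_square algebra_simps)
    also have "\<dots> = (LINT x|M. (u x)\<^sup>2) - 2 * t * (LINT x|M. u x * v x) + t\<^sup>2 * (LINT x|M. (v x)\<^sup>2)"
      by simp
    finally show ?thesis .
  qed
  have "(LINT x|M. u x * v x)\<^sup>2 \<le> (norm_L2 M u)\<^sup>2 * (norm_L2 M v)\<^sup>2"
    unfolding norm_L2_square by (rule discrim_le_of_quadratic_nonneg[OF _ quadratic_nonneg]) simp
  then show ?thesis
    by (rule power2_le_imp_le[OF _ mult_nonneg_nonneg, unfolded power_mult_distrib]) simp_all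
qed

lemma norm_L2_add_le:
  assumes u: "square_integrable M u" and v: "square_integrable M v"
  shows "norm_L2 M (\<lambda>x. u x + v x) \<le> norm_L2 M u + norm_L2 M v"
proof -
  have [simp]: "integrable M (\<lambda>x. (u x)\<^sup>2)" "integrable M (\<lambda>x. (v x)\<^sup>2)"
    "integrable M (\<lambda>x. u x * v x)"
    using u v square_integrable_integrable_mult[OF u v] by (auto simp: square_integrable_def)
  have "(norm_L2 M (\<lambda>x. u x + v x))\<^sup>2
      = (norm_L2 M u)\<^sup>2 + 2 * (LINT x|M. u x * v x) + (norm_L2 M v)\<^sup>2"
    by (simp add: norm_L2_square power2_sum mult.assoc)
  also have "\<dots> \<le> (norm_L2 M u + norm_L2 M v)\<^sup>2"
    using integral_mult_le_norm_L2[OF u v] by (simp add: power2_sum)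
  finally show ?thesis
    by (rule power2_le_imp_le) simp
qed

lemma norm_L2_sum_le:
  "finite A \<Longrightarrow> (\<And>i. i \<in> A \<Longrightarrow> square_integrable M (u i)) \<Longrightarrow>
    norm_L2 M (\<lambda>x. \<Sum>i\<in>A. u i x) \<le> (\<Sum>i\<in>A. norm_L2 M (u i))"
proof (induction A rule: finite_induct)
  case empty
  then show ?case by (simp add: norm_L2_def)
next
  case (insert i A)
  have "norm_L2 M (\<lambda>x. \<Sum>j\<in>insert i A. u j x) \<le> norm_L2 M (u i) + norm_L2 M (\<lambda>x. \<Sum>j\<in>A. u j x)"
    using insert by (simp add: norm_L2_add_le square_integrable_sum)
  also have "\<dots> \<le> (\<Sum>j\<in>insert i A. norm_L2 M (u j))"
    using insert by simp
  finally show ?case .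
qed

lemma nn_integral_SUP_square_le:
  assumes H: "\<And>K. square_integrable M (H K)" and "\<And>K x. 0 \<le> H K x"
    and "\<And>K x. H K x \<le> H (Suc K) x" and bound: "\<And>K. norm_L2 M (H K) \<le> C"
  shows "(\<integral>\<^sup>+x. (SUP K. ennreal ((H K x)\<^sup>2)) \<partial>M) \<le> ennreal (C\<^sup>2)"
proof -
  have [measurable]: "H K \<in> borel_measurable M" for K
    using H by (simp add: square_integrable_def)
  have "incseq (\<lambda>K x. ennreal ((H K x)\<^sup>2))"
    using assms(2,3) by (intro incseq_SucI le_funI ennreal_leI power_mono) auto
  then have "(\<integral>\<^sup>+x. (SUP K. ennreal ((H K x)\<^sup>2)) \<partial>M) = (SUP K. \<integral>\<^sup>+x. ennreal ((H K x)\<^sup>2) \<partial>M)"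
    by (rule nn_integral_monotone_convergence_SUP) measurable
  also have "\<dots> \<le> ennreal (C\<^sup>2)"
  proof (rule SUP_least)
    fix K
    have "(norm_L2 M (H K))\<^sup>2 \<le> C\<^sup>2"
      using bound[of K] by (intro power_mono) auto
    then show "(\<integral>\<^sup>+x. ennreal ((H K x)\<^sup>2) \<partial>M) \<le> ennreal (C\<^sup>2)"
      by (simp add: nn_integral_square_eq_norm_L2[OF H] ennreal_leI)
  qed
  finally show ?thesis .
qed

lemma summable_abs_and_square_suminf_le:
  fixes w :: "nat \<Rightarrow> real"
  assumes "\<And>K. (\<Sum>k<K. \<bar>w k\<bar>)\<^sup>2 \<le> R"
  shows "summable (\<lambda>k. \<bar>w k\<bar>) \<and> (\<Sum>k. w k)\<^sup>2 \<le> R"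
proof
  have partial_le: "(\<Sum>k<K. \<bar>w k\<bar>) \<le> sqrt R" for K
    using assms by (rule real_le_rsqrt)
  then show summable: "summable (\<lambda>k. \<bar>w k\<bar>)"
    by (intro summableI_nonneg_bounded) auto
  have "\<bar>\<Sum>k. w k\<bar> \<le> (\<Sum>k. \<bar>w k\<bar>)"
    by (rule summable_rabs[OF summable])
  also have "\<dots> \<le> sqrt R"
    using partial_le by (rule suminf_le_const[OF summable])
  finally have "\<bar>\<Sum>k. w k\<bar>\<^sup>2 \<le> (sqrt R)\<^sup>2"
    by (rule power_mono) simp
  moreover have "0 \<le> R"
    using assms[of 0] by simp
  ultimately show "(\<Sum>k. w k)\<^sup>2 \<le> R"
    by simp
qed

lemma square_integrable_suminf:
  fixes v :: "nat \<Rightarrow> 'a \<Rightarrow> real"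
  assumes v: "\<And>k. square_integrable M (v k)"
    and bound: "\<And>K. norm_L2 M (\<lambda>x. \<Sum>k<K. \<bar>v k x\<bar>) \<le> C"
  shows "AE x in M. summable (\<lambda>k. v k x)" and "square_integrable M (\<lambda>x. \<Sum>k. v k x)"
proof -
  define H where "H K x = (\<Sum>k<K. \<bar>v k x\<bar>)" for K x
  define G where "G x = (SUP K. ennreal ((H K x)\<^sup>2))" for x
  have H: "square_integrable M (H K)" for K
    unfolding H_def by (intro square_integrable_sum square_integrable_abs v) simp
  have [measurable]: "v k \<in> borel_measurable M" "H K \<in> borel_measurable M" for k K
    using v H by (simp_all add: square_integrable_def)
  have "(\<integral>\<^sup>+x. G x \<partial>M) \<le> ennreal (C\<^sup>2)"
    unfolding G_def using H bound
    by (intro nn_integral_SUP_square_le) (auto simp: H_def[abs_def] intro: sum_mono2)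
  also have "\<dots> < \<infinity>"
    by simp
  finally have G_integral: "(\<integral>\<^sup>+x. G x \<partial>M) < \<infinity>" .
  have summable_if_finite: "summable (\<lambda>k. \<bar>v k x\<bar>)"
    and square_le_G: "ennreal ((\<Sum>k. v k x)\<^sup>2) \<le> G x" if "G x \<noteq> \<infinity>" for x
  proof -
    define R where "R = enn2real (G x)"
    have "G x = ennreal R" "0 \<le> R"
      using that by (auto simp: R_def less_top)
    have "(H K x)\<^sup>2 \<le> R" for K
    proof -
      have "ennreal ((H K x)\<^sup>2) \<le> G x"
        unfolding G_def by (rule SUP_upper) simp
      with \<open>G x = ennreal R\<close> \<open>0 \<le> R\<close> show ?thesis
        by simp
    qed
    then have "summable (\<lambda>k. \<bar>v k x\<bar>) \<and> (\<Sum>k. v k x)\<^sup>2 \<le> R"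
      unfolding H_def by (rule summable_abs_and_square_suminf_le)
    then show "summable (\<lambda>k. \<bar>v k x\<bar>)" "ennreal ((\<Sum>k. v k x)\<^sup>2) \<le> G x"
      using \<open>G x = ennreal R\<close> by (simp_all add: ennreal_leI)
  qed
  have G_finite: "AE x in M. G x \<noteq> \<infinity>"
    using G_integral by (intro nn_integral_noteq_infinite) (auto simp: G_def)
  then show "AE x in M. summable (\<lambda>k. v k x)"
    by eventually_elim (rule summable_rabs_cancel[OF summable_if_finite])
  have "(\<integral>\<^sup>+x. ennreal ((\<Sum>k. v k x)\<^sup>2) \<partial>M) \<le> (\<integral>\<^sup>+x. G x \<partial>M)"
    using G_finite by (intro nn_integral_mono_AE) (auto elim!: eventually_mono intro!: square_le_G)
  also note G_integral
  finally show "square_integrable M (\<lambda>x. \<Sum>k. v k x)"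
    by (subst square_integrable_iff_nn_integral) auto
qed

section \<open>Bessel bounds and synthesis bounds\<close>

definition bessel_bound :: "'a measure \<Rightarrow> (nat \<Rightarrow> 'a \<Rightarrow> real) \<Rightarrow> real \<Rightarrow> bool" where
  "bessel_bound M fs B \<longleftrightarrow> (\<forall>h. square_integrable M h \<longrightarrow>
      summable (\<lambda>m. (LINT x|M. h x * fs m x)\<^sup>2) \<and>
      (\<Sum>m. (LINT x|M. h x * fs m x)\<^sup>2) \<le> B * (norm_L2 M h)\<^sup>2)"

lemma Bessel_iff_bessel_bound: "Bessel S fs \<longleftrightarrow> (\<exists>B>0. bessel_bound (lebesgue_on S) fs B)"
  unfolding Bessel_def bessel_bound_def L2inner_def L2_iff_square_integrable norm_L2_square
  by (simp add: power2_eq_square)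

lemma le_of_square_le_mult: "x\<^sup>2 \<le> y * x \<Longrightarrow> 0 \<le> y \<Longrightarrow> x \<le> (y::real)"
proof (cases "x \<le> 0")
  case False
  assume "x\<^sup>2 \<le> y * x"
  with False show ?thesis
    by (simp add: power2_eq_square mult_le_cancel_right_pos)
qed simp

lemma bessel_bound_synthesis:
  assumes bessel: "bessel_bound M fs B" and "0 \<le> B" and fs: "\<And>m. square_integrable M (fs m)"
  shows "norm_L2 M (\<lambda>x. \<Sum>m<K. c m * fs m x) \<le> sqrt B * sqrt (\<Sum>m<K. (c m)\<^sup>2)"
proof -
  define F where "F x = (\<Sum>m<K. c m * fs m x)" for x
  define e where "e m = (LINT x|M. F x * fs m x)" for m
  have F: "square_integrable M F"
    unfolding F_def by (intro square_integrable_sum square_integrable_cmult fs) simp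
  have "F x * F x = (\<Sum>m<K. c m * (F x * fs m x))" for x
    by (subst (2) F_def) (simp add: sum_distrib_left ac_simps)
  then have "(norm_L2 M F)\<^sup>2 = (LINT x|M. (\<Sum>m<K. c m * (F x * fs m x)))"
    unfolding norm_L2_square by (simp add: power2_eq_square)
  also have "\<dots> = (\<Sum>m<K. c m * e m)"
    unfolding e_def using square_integrable_integrable_mult[OF F fs] by simp
  also have "\<dots> \<le> sqrt (\<Sum>m<K. (c m)\<^sup>2) * sqrt (\<Sum>m<K. (e m)\<^sup>2)"
    unfolding real_sqrt_mult[symmetric] by (rule real_le_rsqrt) (rule Cauchy_Schwarz_ineq_sum)
  also have "\<dots> \<le> sqrt (\<Sum>m<K. (c m)\<^sup>2) * (sqrt B * norm_L2 M F)"
  proof -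
    have "summable (\<lambda>m. (e m)\<^sup>2)" "(\<Sum>m. (e m)\<^sup>2) \<le> B * (norm_L2 M F)\<^sup>2"
      using bessel F unfolding bessel_bound_def e_def by auto
    then have "(\<Sum>m<K. (e m)\<^sup>2) \<le> (sqrt B * norm_L2 M F)\<^sup>2"
      using sum_le_suminf[of "\<lambda>m. (e m)\<^sup>2" "{..<K}"] \<open>0 \<le> B\<close> by (simp add: power_mult_distrib)
    then show ?thesis
      using \<open>0 \<le> B\<close> by (intro mult_left_mono real_le_lsqrt) (auto simp: sum_nonneg)
  qed
  finally have "(norm_L2 M F)\<^sup>2 \<le> (sqrt B * sqrt (\<Sum>m<K. (c m)\<^sup>2)) * norm_L2 M F"
    by (simp only: ac_simps)
  then show ?thesis
    unfolding F_def[symmetric] by (rule le_of_square_le_mult) (simp add: \<open>0 \<le> B\<close> sum_nonneg)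
qed

lemma bessel_bound_of_synthesis:
  assumes gs: "\<And>m. square_integrable M (gs m)" and "0 \<le> C"
    and synthesis: "\<And>K c. norm_L2 M (\<lambda>x. \<Sum>m<K. c m * gs m x) \<le> C * sqrt (\<Sum>m<K. (c m)\<^sup>2)"
  shows "bessel_bound M gs (C\<^sup>2)"
  unfolding bessel_bound_def
proof (intro allI impI)
  fix h assume h: "square_integrable M h"
  define c where "c m = (LINT x|M. h x * gs m x)" for m
  have partial: "(\<Sum>m<K. (c m)\<^sup>2) \<le> C\<^sup>2 * (norm_L2 M h)\<^sup>2" for K
  proof -
    define S where "S = (\<Sum>m<K. (c m)\<^sup>2)"
    have "0 \<le> S"
      by (simp add: S_def sum_nonneg)
    have u: "square_integrable M (\<lambda>x. \<Sum>m<K. c m * gs m x)"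
      by (intro square_integrable_sum square_integrable_cmult gs) simp
    have "(sqrt S)\<^sup>2 = (\<Sum>m<K. c m * (LINT x|M. h x * gs m x))"
      by (simp add: S_def c_def power2_eq_square sum_nonneg)
    also have "\<dots> = (LINT x|M. h x * (\<Sum>m<K. c m * gs m x))"
      using square_integrable_integrable_mult[OF h gs]
      by (simp add: sum_distrib_left ac_simps)
    also have "\<dots> \<le> norm_L2 M h * norm_L2 M (\<lambda>x. \<Sum>m<K. c m * gs m x)"
      by (rule integral_mult_le_norm_L2[OF h u])
    also have "\<dots> \<le> (norm_L2 M h * C) * sqrt S"
      unfolding S_def using synthesis by (simp add: mult_left_mono mult.assoc)
    finally have "sqrt S \<le> norm_L2 M h * C"
      by (rule le_of_square_le_mult) (simp add: \<open>0 \<le> C\<close>)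
    then have "(sqrt S)\<^sup>2 \<le> (norm_L2 M h * C)\<^sup>2"
      by (rule power_mono) (simp add: \<open>0 \<le> S\<close>)
    then show ?thesis
      using \<open>0 \<le> S\<close> by (simp add: S_def power_mult_distrib mult.commute)
  qed
  have "summable (\<lambda>m. (c m)\<^sup>2)"
    using partial by (intro summableI_nonneg_bounded) auto
  moreover have "(\<Sum>m. (c m)\<^sup>2) \<le> C\<^sup>2 * (norm_L2 M h)\<^sup>2"
    using partial by (intro suminf_le_const[OF \<open>summable _\<close>])
  ultimately show "summable (\<lambda>m. (LINT x|M. h x * gs m x)\<^sup>2) \<and>
      (\<Sum>m. (LINT x|M. h x * gs m x)\<^sup>2) \<le> C\<^sup>2 * (norm_L2 M h)\<^sup>2"
    unfolding c_def by simp
qed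

section \<open>The linear part of the operator T\<close>

lemma AE_lebesgue_real_affine:
  fixes c t :: real
  assumes "c \<noteq> 0" and "AE x in lebesgue. P x"
  shows "AE x in lebesgue. P (t + c * x)"
proof -
  from assms(2) obtain Ns where Ns: "{x. \<not> P x} \<subseteq> Ns" "emeasure lebesgue Ns = 0" "Ns \<in> sets lebesgue"
    by (auto elim!: AE_E)
  have "(\<lambda>x. indicator Ns (t + c * x) :: real) \<in> borel_measurable lebesgue"
    using borel_measurable_affine[of "indicator Ns" c t] Ns(3) \<open>c \<noteq> 0\<close> by simp
  then have "(\<lambda>x. ennreal (indicator Ns (t + c * x))) \<in> borel_measurable lebesgue"
    by (rule measurable_compose[OF _ measurable_ennreal])
  then have [measurable]: "(\<lambda>x. indicator Ns (t + c * x) :: ennreal) \<in> borel_measurable lebesgue"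
    by (simp add: ennreal_indicator)
  have "ennreal \<bar>c\<bar> * (\<integral>\<^sup>+x. indicator Ns (t + c * x) \<partial>lebesgue) = emeasure lebesgue Ns"
    using nn_integral_real_affine_lebesgue[of "indicator Ns" c t] Ns(3) \<open>c \<noteq> 0\<close> by simp
  then have "(\<integral>\<^sup>+x. indicator Ns (t + c * x) \<partial>lebesgue) = 0"
    using Ns(2) \<open>c \<noteq> 0\<close> by simp
  then have "AE x in lebesgue. indicator Ns (t + c * x) = (0 :: ennreal)"
    by (simp add: nn_integral_0_iff_AE)
  then show ?thesis
    by eventually_elim (use Ns(1) in \<open>auto simp: indicator_def split: if_splits\<close>)
qed

lemma borel_measurable_zero_extension:
  fixes u :: "real \<Rightarrow> real"
  assumes "S \<in> sets lebesgue" and "u \<in> borel_measurable (lebesgue_on S)"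
  shows "(\<lambda>x. indicator S x * u x) \<in> borel_measurable lebesgue"
  using assms borel_measurable_restrict_space_iff[of S lebesgue u] by simp

locale affine_fractal =
  fixes N :: nat and xs a c :: "nat \<Rightarrow> real" and \<alpha> :: "nat \<Rightarrow> real \<Rightarrow> real" and \<Lambda> :: real
  assumes xs_strict_mono: "strict_mono_on {0..N} xs"
    and affine_endpoints: "\<forall>n\<in>{1..N}. a n * xs 0 + c n = xs (n - 1) \<and> a n * xs N + c n = xs n"
    and \<alpha>_measurable: "\<forall>n\<in>{1..N}. \<alpha> n \<in> borel_measurable (lebesgue_on {xs 0 .. xs N})"
    and \<Lambda>_nonneg: "0 \<le> \<Lambda>" and \<Lambda>_less_1: "\<Lambda> < 1"
    and \<alpha>_bound: "AE y in lebesgue_on {xs 0 .. xs N}. \<forall>n\<in>{1..N}. \<bar>\<alpha> n y\<bar> \<le> \<Lambda>"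
begin

abbreviation I :: "real set" where "I \<equiv> {xs 0 .. xs N}"

definition Linv :: "nat \<Rightarrow> real \<Rightarrow> real" where
  "Linv n y = (y - c n) / a n"

definition rb_op :: "(real \<Rightarrow> real) \<Rightarrow> real \<Rightarrow> real" where
  "rb_op u y = (\<Sum>n\<in>{1..N}. indicator (Ipart xs n) y * (\<alpha> n (Linv n y) * u (Linv n y)))"

lemma Top_zero_eq_rb_op: "Top N xs a c \<alpha> f (\<lambda>_. 0) g y = f y + rb_op g y"
  by (simp add: Top_def rb_op_def Linv_def)

lemma xs_less: "i < j \<Longrightarrow> j \<le> N \<Longrightarrow> xs i < xs j"
  using xs_strict_mono by (auto simp: strict_mono_on_def)

lemma xs_le: "i \<le> j \<Longrightarrow> j \<le> N \<Longrightarrow> xs i \<le> xs j"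
  using xs_less by (cases "i = j") (auto simp: less_imp_le)

lemma a_eq:
  assumes "n \<in> {1..N}"
  shows "a n * (xs N - xs 0) = xs n - xs (n - 1)"
proof -
  have "a n * xs 0 + c n = xs (n - 1)" "a n * xs N + c n = xs n"
    using affine_endpoints assms by auto
  then show ?thesis
    by (simp add: right_diff_distrib)
qed

lemma a_pos:
  assumes "n \<in> {1..N}"
  shows "0 < a n"
proof -
  have "0 < xs n - xs (n - 1)" "0 < xs N - xs 0"
    using xs_less[of "n - 1" n] xs_less[of 0 N] assms by auto
  with a_eq[OF assms] show ?thesis
    by (metis zero_less_mult_pos2)
qed

lemma sum_a_le_1: "(\<Sum>n\<in>{1..N}. a n) \<le> 1"
proof (cases "N = 0")
  case False
  have "(\<Sum>n\<in>{1..N}. a n) * (xs N - xs 0) = (\<Sum>n\<in>{1..N}. xs n - xs (n - 1))"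
    by (simp add: sum_distrib_right a_eq)
  also have "\<dots> = xs N - xs 0"
    by (induction N) (auto simp: atLeastAtMostSuc_conv)
  finally show ?thesis
    using xs_less[of 0 N] False by simp
qed simp

lemma Linv_mem:
  assumes n: "n \<in> {1..N}" and y: "y \<in> Ipart xs n"
  shows "Linv n y \<in> I"
proof -
  have "xs (n - 1) \<le> y" "y \<le> xs n"
    using y n by (auto simp: Ipart_def split: if_splits)
  then show ?thesis
    using affine_endpoints a_pos[OF n] n
    by (auto simp: Linv_def pos_le_divide_eq pos_divide_le_eq algebra_simps)
qed

lemma Ipart_disjoint:
  assumes "n \<in> {1..N}" "m \<in> {1..N}" "y \<in> Ipart xs n" "y \<in> Ipart xs m"
  shows "n = m"
proof -
  have False if "p \<in> {1..N}" "q \<in> {1..N}" "p < q" "y \<in> Ipart xs p" "y \<in> Ipart xs q" for p q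
  proof -
    have "y \<le> xs p" "xs (q - 1) < y"
      using that by (auto simp: Ipart_def split: if_splits)
    moreover have "xs p \<le> xs (q - 1)"
      using that by (intro xs_le) auto
    ultimately show False by simp
  qed
  then show ?thesis
    using assms by (metis linorder_neqE_nat)
qed

lemma rb_op_on_Ipart:
  assumes n: "n \<in> {1..N}" and y: "y \<in> Ipart xs n"
  shows "rb_op u y = \<alpha> n (Linv n y) * u (Linv n y)"
proof -
  have "indicator (Ipart xs m) y = (if m = n then 1 else 0 :: real)" if "m \<in> {1..N}" for m
    using Ipart_disjoint[OF n that y] y by (cases "m = n") (auto simp: indicator_def)
  then have "rb_op u y = (\<Sum>m\<in>{1..N}. if m = n then \<alpha> m (Linv m y) * u (Linv m y) else 0)"
    unfolding rb_op_def by (intro sum.cong) auto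
  then show ?thesis
    using n by simp
qed

lemma rb_op_outside: "\<not> (\<exists>n\<in>{1..N}. y \<in> Ipart xs n) \<Longrightarrow> rb_op u y = 0"
  by (simp add: rb_op_def)

lemma rb_op_lincomb: "rb_op (\<lambda>x. \<Sum>m\<in>A. r m * u m x) y = (\<Sum>m\<in>A. r m * rb_op (u m) y)"
proof -
  have "rb_op (\<lambda>x. \<Sum>m\<in>A. r m * u m x) y =
      (\<Sum>n\<in>{1..N}. \<Sum>m\<in>A. r m * (indicator (Ipart xs n) y * (\<alpha> n (Linv n y) * u m (Linv n y))))"
    unfolding rb_op_def by (simp add: sum_distrib_left mult.left_commute)
  also have "\<dots> = (\<Sum>m\<in>A. r m * rb_op (u m) y)"
    unfolding rb_op_def sum_distrib_left by (rule sum.swap)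
  finally show ?thesis .
qed

lemma rb_op_suminf:
  assumes "\<And>n. n \<in> {1..N} \<Longrightarrow> y \<in> Ipart xs n \<Longrightarrow> summable (\<lambda>k. u k (Linv n y))"
  shows "(\<lambda>k. rb_op (u k) y) sums rb_op (\<lambda>x. \<Sum>k. u k x) y"
proof (cases "\<exists>n\<in>{1..N}. y \<in> Ipart xs n")
  case True
  then obtain n where n: "n \<in> {1..N}" "y \<in> Ipart xs n" by blast
  show ?thesis
    unfolding rb_op_on_Ipart[OF n] using assms[OF n] by (intro sums_mult summable_sums)
next
  case False
  then show ?thesis
    by (simp add: rb_op_outside[OF False])
qed

lemma Linv_affine: "n \<in> {1..N} \<Longrightarrow> Linv n = (\<lambda>y. - c n / a n + (1 / a n) * y)"
  using a_pos[of n] by (simp add: Linv_def fun_eq_iff field_simps)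

lemma Linv_measurable: "n \<in> {1..N} \<Longrightarrow> Linv n \<in> lebesgue \<rightarrow>\<^sub>M lebesgue"
  using lebesgue_affine_measurable[where c="\<lambda>_::real. 1 / a n" and t="- c n / a n"] a_pos[of n]
  by (simp add: Linv_affine)

lemma measurable_Linv:
  "n \<in> {1..N} \<Longrightarrow> W \<in> borel_measurable lebesgue \<Longrightarrow> (\<lambda>y. W (Linv n y)) \<in> borel_measurable lebesgue"
  using measurable_compose[OF Linv_measurable] .

lemma nn_integral_Linv:
  assumes "n \<in> {1..N}" "W \<in> borel_measurable lebesgue"
  shows "(\<integral>\<^sup>+y. W (Linv n y) \<partial>lebesgue) = ennreal (a n) * (\<integral>\<^sup>+x. W x \<partial>lebesgue)"
proof -
  have "a n \<noteq> 0" "0 < a n"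
    using a_pos[OF assms(1)] by auto
  have "(\<integral>\<^sup>+y. W (Linv n y) \<partial>lebesgue) = ennreal \<bar>a n\<bar> * (\<integral>\<^sup>+x. W (Linv n (c n + a n * x)) \<partial>lebesgue)"
    by (rule nn_integral_real_affine_lebesgue[OF measurable_Linv[OF assms] \<open>a n \<noteq> 0\<close>])
  also have "(\<lambda>x. W (Linv n (c n + a n * x))) = W"
    using \<open>a n \<noteq> 0\<close> by (simp add: Linv_def)
  finally show ?thesis
    using \<open>0 < a n\<close> by simp
qed

lemma AE_Linv:
  assumes n: "n \<in> {1..N}" and P: "AE x in lebesgue_on I. P x"
  shows "AE y in lebesgue_on I. y \<in> Ipart xs n \<longrightarrow> P (Linv n y)"
proof -
  have "AE x in lebesgue. x \<in> I \<longrightarrow> P x"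
    using P by (simp add: AE_restrict_space_iff)
  then have "AE y in lebesgue. Linv n y \<in> I \<longrightarrow> P (Linv n y)"
    unfolding Linv_affine[OF n] using a_pos[OF n] by (intro AE_lebesgue_real_affine) auto
  then have "AE y in lebesgue. y \<in> I \<longrightarrow> y \<in> Ipart xs n \<longrightarrow> P (Linv n y)"
    by eventually_elim (use Linv_mem[OF n] in blast)
  then show ?thesis
    by (simp add: AE_restrict_space_iff)
qed

lemma sets_lebesgue_Ipart: "Ipart xs n \<in> sets lebesgue"
  by (simp add: Ipart_def)

lemma rb_op_measurable:
  assumes u: "u \<in> borel_measurable (lebesgue_on I)"
  shows "rb_op u \<in> borel_measurable (lebesgue_on I)"
proof (rule measurable_restrict_space1)
  define W where "W n x = indicator I x * (\<alpha> n x * u x)" for n x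
  have rb_op_eq: "rb_op u = (\<lambda>y. \<Sum>n\<in>{1..N}. indicator (Ipart xs n) y * W n (Linv n y))"
    unfolding rb_op_def
  proof (rule ext, rule sum.cong[OF refl])
    fix y n assume n: "n \<in> {1..N}"
    show "indicator (Ipart xs n) y * (\<alpha> n (Linv n y) * u (Linv n y)) =
        indicator (Ipart xs n) y * W n (Linv n y)"
    proof (cases "y \<in> Ipart xs n")
      case True
      then show ?thesis
        using Linv_mem[OF n True] by (simp add: W_def)
    qed simp
  qed
  have W: "W n \<in> borel_measurable lebesgue" if "n \<in> {1..N}" for n
    unfolding W_def using \<alpha>_measurable that u
    by (intro borel_measurable_zero_extension[of I] borel_measurable_times) auto
  show "rb_op u \<in> borel_measurable lebesgue"
    unfolding rb_op_eq
  proof (intro borel_measurable_sum borel_measurable_times)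
    fix n assume "n \<in> {1..N}"
    then show "(\<lambda>y. W n (Linv n y)) \<in> borel_measurable lebesgue"
      by (intro measurable_Linv W)
  qed (simp add: borel_measurable_indicator sets_lebesgue_Ipart)
qed

lemma rb_op_square_le_sum:
  "(rb_op u y)\<^sup>2 \<le> (\<Sum>n\<in>{1..N}. indicator I (Linv n y) * (\<alpha> n (Linv n y) * u (Linv n y))\<^sup>2)"
proof (cases "\<exists>n\<in>{1..N}. y \<in> Ipart xs n")
  case True
  then obtain n where n: "n \<in> {1..N}" "y \<in> Ipart xs n" by blast
  have "(rb_op u y)\<^sup>2 = indicator I (Linv n y) * (\<alpha> n (Linv n y) * u (Linv n y))\<^sup>2"
    using Linv_mem[OF n] by (simp add: rb_op_on_Ipart[OF n])
  also have "\<dots> \<le> (\<Sum>n\<in>{1..N}. indicator I (Linv n y) * (\<alpha> n (Linv n y) * u (Linv n y))\<^sup>2)"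
    using n(1) by (intro member_le_sum) auto
  finally show ?thesis .
next
  case False
  then show ?thesis
    by (simp add: rb_op_outside sum_nonneg)
qed

lemma nn_integral_alpha_mult_square_le:
  assumes n: "n \<in> {1..N}" and u: "u \<in> borel_measurable (lebesgue_on I)"
  shows "(\<integral>\<^sup>+x. ennreal (indicator I x * (\<alpha> n x * u x)\<^sup>2) \<partial>lebesgue)
    \<le> ennreal (\<Lambda>\<^sup>2) * (\<integral>\<^sup>+x. ennreal ((u x)\<^sup>2) \<partial>lebesgue_on I)"
proof -
  have "AE x in lebesgue. x \<in> I \<longrightarrow> \<bar>\<alpha> n x\<bar> \<le> \<Lambda>"
    using \<alpha>_bound n by (auto simp: AE_restrict_space_iff elim!: eventually_mono)
  then have "AE x in lebesgue. indicator I x * (\<alpha> n x * u x)\<^sup>2 \<le> \<Lambda>\<^sup>2 * (indicator I x * (u x)\<^sup>2)"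
  proof eventually_elim
    case (elim x)
    then have "(\<alpha> n x)\<^sup>2 \<le> \<Lambda>\<^sup>2" if "x \<in> I"
      using that \<Lambda>_nonneg abs_le_square_iff[of "\<alpha> n x" \<Lambda>] by simp
    then show ?case
      by (cases "x \<in> I") (simp_all add: power_mult_distrib mult_right_mono)
  qed
  then have "(\<integral>\<^sup>+x. ennreal (indicator I x * (\<alpha> n x * u x)\<^sup>2) \<partial>lebesgue)
      \<le> (\<integral>\<^sup>+x. ennreal (\<Lambda>\<^sup>2) * ennreal (indicator I x * (u x)\<^sup>2) \<partial>lebesgue)"
    by (intro nn_integral_mono_AE) (auto elim!: eventually_mono simp: ennreal_mult[symmetric] ennreal_leI)
  also have "\<dots> = ennreal (\<Lambda>\<^sup>2) * (\<integral>\<^sup>+x. ennreal (indicator I x * (u x)\<^sup>2) \<partial>lebesgue)"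
    using u by (intro nn_integral_cmult measurable_compose[OF _ measurable_ennreal]
        borel_measurable_zero_extension[of I] borel_measurable_power) auto
  also have "(\<integral>\<^sup>+x. ennreal (indicator I x * (u x)\<^sup>2) \<partial>lebesgue) = (\<integral>\<^sup>+x. ennreal ((u x)\<^sup>2) \<partial>lebesgue_on I)"
    by (simp add: nn_integral_restrict_space ennreal_mult' ennreal_indicator mult.commute)
  finally show ?thesis .
qed

lemma nn_integral_rb_op_square_le:
  assumes u: "u \<in> borel_measurable (lebesgue_on I)"
  shows "(\<integral>\<^sup>+y. ennreal ((rb_op u y)\<^sup>2) \<partial>lebesgue_on I)
    \<le> ennreal (\<Lambda>\<^sup>2) * (\<integral>\<^sup>+x. ennreal ((u x)\<^sup>2) \<partial>lebesgue_on I)"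
proof -
  define W where "W n x = indicator I x * (\<alpha> n x * u x)\<^sup>2" for n x
  have W: "(\<lambda>x. ennreal (W n x)) \<in> borel_measurable lebesgue" if "n \<in> {1..N}" for n
    unfolding W_def using \<alpha>_measurable that u
    by (intro measurable_compose[OF _ measurable_ennreal] borel_measurable_zero_extension[of I]
        borel_measurable_power borel_measurable_times) auto
  have "(\<integral>\<^sup>+y. ennreal ((rb_op u y)\<^sup>2) \<partial>lebesgue_on I)
      = (\<integral>\<^sup>+y. ennreal ((rb_op u y)\<^sup>2) * indicator I y \<partial>lebesgue)"
    by (simp add: nn_integral_restrict_space)
  also have "\<dots> \<le> (\<integral>\<^sup>+y. (\<Sum>n\<in>{1..N}. ennreal (W n (Linv n y))) \<partial>lebesgue)"
    using rb_op_square_le_sum[of u]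
    by (intro nn_integral_mono) (auto simp: W_def sum_ennreal indicator_def intro!: ennreal_leI)
  also have "\<dots> = (\<Sum>n\<in>{1..N}. \<integral>\<^sup>+y. ennreal (W n (Linv n y)) \<partial>lebesgue)"
    using W by (intro nn_integral_sum measurable_Linv) auto
  also have "\<dots> = (\<Sum>n\<in>{1..N}. ennreal (a n) * (\<integral>\<^sup>+x. ennreal (W n x) \<partial>lebesgue))"
    using W by (intro sum.cong refl nn_integral_Linv) auto
  also have "\<dots> \<le> (\<Sum>n\<in>{1..N}. ennreal (a n)) * (ennreal (\<Lambda>\<^sup>2) * (\<integral>\<^sup>+x. ennreal ((u x)\<^sup>2) \<partial>lebesgue_on I))"
    unfolding sum_distrib_right W_def using nn_integral_alpha_mult_square_le[OF _ u]
    by (intro sum_mono mult_left_mono) auto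
  also have "(\<Sum>n\<in>{1..N}. ennreal (a n)) \<le> 1"
    using a_pos sum_a_le_1 by (subst sum_ennreal) (auto simp: less_imp_le ennreal_leI)
  finally show ?thesis
    by (simp add: mult_right_mono)
qed

lemma square_integrable_rb_op:
  assumes u: "square_integrable (lebesgue_on I) u"
  shows "square_integrable (lebesgue_on I) (rb_op u)"
proof -
  have u_measurable: "u \<in> borel_measurable (lebesgue_on I)"
    using u by (simp add: square_integrable_def)
  have "(\<integral>\<^sup>+y. ennreal ((rb_op u y)\<^sup>2) \<partial>lebesgue_on I) < \<infinity>"
    using nn_integral_rb_op_square_le[OF u_measurable]
    by (simp add: nn_integral_square_eq_norm_L2[OF u] ennreal_mult[symmetric] le_less_trans)
  then show ?thesis
    using rb_op_measurable[OF u_measurable] by (simp add: square_integrable_iff_nn_integral)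
qed

lemma norm_L2_rb_op_le:
  assumes u: "square_integrable (lebesgue_on I) u"
  shows "norm_L2 (lebesgue_on I) (rb_op u) \<le> \<Lambda> * norm_L2 (lebesgue_on I) u"
proof -
  have "ennreal ((norm_L2 (lebesgue_on I) (rb_op u))\<^sup>2) = (\<integral>\<^sup>+y. ennreal ((rb_op u y)\<^sup>2) \<partial>lebesgue_on I)"
    by (rule nn_integral_square_eq_norm_L2[OF square_integrable_rb_op[OF u], symmetric])
  also have "\<dots> \<le> ennreal (\<Lambda>\<^sup>2) * (\<integral>\<^sup>+x. ennreal ((u x)\<^sup>2) \<partial>lebesgue_on I)"
    using u by (intro nn_integral_rb_op_square_le) (simp add: square_integrable_def)
  also have "\<dots> = ennreal ((\<Lambda> * norm_L2 (lebesgue_on I) u)\<^sup>2)"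
    by (simp add: nn_integral_square_eq_norm_L2[OF u] power_mult_distrib ennreal_mult)
  finally have "(norm_L2 (lebesgue_on I) (rb_op u))\<^sup>2 \<le> (\<Lambda> * norm_L2 (lebesgue_on I) u)\<^sup>2"
    by simp
  then show ?thesis
    by (rule power2_le_imp_le) (simp add: \<Lambda>_nonneg)
qed

lemma norm_L2_fixed_point_le:
  assumes u: "square_integrable (lebesgue_on I) u" and f: "square_integrable (lebesgue_on I) f"
    and fixed: "AE y in lebesgue_on I. u y = f y + rb_op u y"
  shows "norm_L2 (lebesgue_on I) u \<le> norm_L2 (lebesgue_on I) f / (1 - \<Lambda>)"
proof -
  have Au: "square_integrable (lebesgue_on I) (rb_op u)"
    by (rule square_integrable_rb_op[OF u])
  have "norm_L2 (lebesgue_on I) u = norm_L2 (lebesgue_on I) (\<lambda>y. f y + rb_op u y)"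
    using u f Au fixed by (intro norm_L2_cong_AE) (auto simp: square_integrable_def)
  also have "\<dots> \<le> norm_L2 (lebesgue_on I) f + norm_L2 (lebesgue_on I) (rb_op u)"
    by (rule norm_L2_add_le[OF f Au])
  also have "\<dots> \<le> norm_L2 (lebesgue_on I) f + \<Lambda> * norm_L2 (lebesgue_on I) u"
    using norm_L2_rb_op_le[OF u] by simp
  finally show ?thesis
    using \<Lambda>_less_1 by (simp add: field_simps)
qed

lemma fixed_point_lincomb:
  assumes "finite A" and "\<And>m. m \<in> A \<Longrightarrow> AE y in lebesgue_on I. g m y = f m y + rb_op (g m) y"
  shows "AE y in lebesgue_on I. (\<Sum>m\<in>A. r m * g m y)
    = (\<Sum>m\<in>A. r m * f m y) + rb_op (\<lambda>x. \<Sum>m\<in>A. r m * g m x) y"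
proof -
  have "AE y in lebesgue_on I. \<forall>m\<in>A. g m y = f m y + rb_op (g m) y"
    using assms by (intro eventually_ball_finite ballI)
  then show ?thesis
    by eventually_elim (simp add: rb_op_lincomb algebra_simps sum.distrib[symmetric])
qed

lemma square_integrable_rb_op_power:
  "square_integrable (lebesgue_on I) f \<Longrightarrow> square_integrable (lebesgue_on I) ((rb_op ^^ k) f)"
  by (induction k) (simp_all add: square_integrable_rb_op)

lemma norm_L2_rb_op_power_le:
  assumes f: "square_integrable (lebesgue_on I) f"
  shows "norm_L2 (lebesgue_on I) ((rb_op ^^ k) f) \<le> \<Lambda> ^ k * norm_L2 (lebesgue_on I) f"
proof (induction k)
  case (Suc k)
  have "norm_L2 (lebesgue_on I) ((rb_op ^^ Suc k) f) \<le> \<Lambda> * norm_L2 (lebesgue_on I) ((rb_op ^^ k) f)"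
    using norm_L2_rb_op_le[OF square_integrable_rb_op_power[OF f]] by simp
  also have "\<dots> \<le> \<Lambda> * (\<Lambda> ^ k * norm_L2 (lebesgue_on I) f)"
    using Suc.IH \<Lambda>_nonneg by (rule mult_left_mono)
  finally show ?case
    by simp
qed simp

lemma norm_L2_neumann_partial_sum_le:
  assumes f: "square_integrable (lebesgue_on I) f"
  shows "norm_L2 (lebesgue_on I) (\<lambda>x. \<Sum>k<K. \<bar>(rb_op ^^ k) f x\<bar>) \<le> norm_L2 (lebesgue_on I) f / (1 - \<Lambda>)"
proof -
  have "norm_L2 (lebesgue_on I) (\<lambda>x. \<Sum>k<K. \<bar>(rb_op ^^ k) f x\<bar>) \<le> (\<Sum>k<K. norm_L2 (lebesgue_on I) ((rb_op ^^ k) f))"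
    using norm_L2_sum_le[of "{..<K}" "lebesgue_on I" "\<lambda>k x. \<bar>(rb_op ^^ k) f x\<bar>"]
    by (simp add: square_integrable_abs square_integrable_rb_op_power[OF f])
  also have "\<dots> \<le> (\<Sum>k<K. \<Lambda> ^ k) * norm_L2 (lebesgue_on I) f"
    unfolding sum_distrib_right using norm_L2_rb_op_power_le[OF f] by (rule sum_mono)
  also have "\<dots> \<le> (\<Sum>k. \<Lambda> ^ k) * norm_L2 (lebesgue_on I) f"
    using \<Lambda>_nonneg \<Lambda>_less_1
    by (intro mult_right_mono sum_le_suminf summable_geometric) auto
  finally show ?thesis
    using \<Lambda>_nonneg \<Lambda>_less_1 by (simp add: suminf_geometric divide_inverse mult.commute)
qed

lemma fixed_point_exists:
  assumes f: "square_integrable (lebesgue_on I) f"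
  shows "\<exists>g. square_integrable (lebesgue_on I) g \<and> (AE y in lebesgue_on I. g y = f y + rb_op g y)"
proof (intro exI conjI)
  define g where "g x = (\<Sum>k. (rb_op ^^ k) f x)" for x
  note series = square_integrable_suminf[OF square_integrable_rb_op_power[OF f]
      norm_L2_neumann_partial_sum_le[OF f]]
  show "square_integrable (lebesgue_on I) g"
    unfolding g_def[abs_def] by (rule series(2))
  have "AE y in lebesgue_on I. \<forall>n\<in>{1..N}. y \<in> Ipart xs n \<longrightarrow> summable (\<lambda>k. (rb_op ^^ k) f (Linv n y))"
    by (intro eventually_ball_finite finite_atLeastAtMost ballI AE_Linv series(1))
  with series(1) show "AE y in lebesgue_on I. g y = f y + rb_op g y"
  proof eventually_elim
    case (elim y)
    then have "(\<lambda>k. rb_op ((rb_op ^^ k) f) y) sums rb_op g y"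
      unfolding g_def[abs_def] by (intro rb_op_suminf) auto
    then have "(\<lambda>k. (rb_op ^^ k) f y) sums (rb_op g y + f y)"
      using sums_Suc_iff[of "\<lambda>k. (rb_op ^^ k) f y"] by simp
    then show ?case
      by (simp add: g_def sums_iff)
  qed
qed

lemma fractal_fixed_point:
  assumes "square_integrable (lebesgue_on I) f"
  shows "square_integrable (lebesgue_on I) (fractal N xs a c \<alpha> f (\<lambda>_. 0))"
    and "AE y in lebesgue_on I. fractal N xs a c \<alpha> f (\<lambda>_. 0) y
      = f y + rb_op (fractal N xs a c \<alpha> f (\<lambda>_. 0)) y"
proof -
  have "\<exists>g. L2 I g \<and> (AE y in lebesgue_on I. g y = Top N xs a c \<alpha> f (\<lambda>_. 0) g y)"
    using fixed_point_exists[OF assms] by (simp add: L2_iff_square_integrable Top_zero_eq_rb_op)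
  from someI_ex[OF this]
  show "square_integrable (lebesgue_on I) (fractal N xs a c \<alpha> f (\<lambda>_. 0))"
    and "AE y in lebesgue_on I. fractal N xs a c \<alpha> f (\<lambda>_. 0) y
      = f y + rb_op (fractal N xs a c \<alpha> f (\<lambda>_. 0)) y"
    by (simp_all add: fractal_def L2_iff_square_integrable Top_zero_eq_rb_op)
qed

lemma norm_L2_fractal_lincomb_le:
  fixes fs :: "nat \<Rightarrow> real \<Rightarrow> real"
  assumes "\<And>m. square_integrable (lebesgue_on I) (fs m)"
  shows "norm_L2 (lebesgue_on I) (\<lambda>x. \<Sum>m<K. r m * fractal N xs a c \<alpha> (fs m) (\<lambda>_. 0) x)
    \<le> norm_L2 (lebesgue_on I) (\<lambda>x. \<Sum>m<K. r m * fs m x) / (1 - \<Lambda>)"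
  using assms
  by (intro norm_L2_fixed_point_le fixed_point_lincomb square_integrable_sum square_integrable_cmult
      fractal_fixed_point) auto

lemma bessel_bound_fractal:
  assumes fs: "\<And>m. square_integrable (lebesgue_on I) (fs m)"
    and B: "bessel_bound (lebesgue_on I) fs B" "0 \<le> B"
  shows "bessel_bound (lebesgue_on I) (\<lambda>m. fractal N xs a c \<alpha> (fs m) (\<lambda>_. 0)) ((sqrt B / (1 - \<Lambda>))\<^sup>2)"
proof (rule bessel_bound_of_synthesis)
  fix K r
  have "norm_L2 (lebesgue_on I) (\<lambda>x. \<Sum>m<K. r m * fractal N xs a c \<alpha> (fs m) (\<lambda>_. 0) x)
      \<le> norm_L2 (lebesgue_on I) (\<lambda>x. \<Sum>m<K. r m * fs m x) / (1 - \<Lambda>)"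
    by (rule norm_L2_fractal_lincomb_le[OF fs])
  also have "\<dots> \<le> sqrt B * sqrt (\<Sum>m<K. (r m)\<^sup>2) / (1 - \<Lambda>)"
    using bessel_bound_synthesis[OF B(1,2) fs] \<Lambda>_less_1 by (intro divide_right_mono) auto
  finally show "norm_L2 (lebesgue_on I) (\<lambda>x. \<Sum>m<K. r m * fractal N xs a c \<alpha> (fs m) (\<lambda>_. 0) x)
      \<le> sqrt B / (1 - \<Lambda>) * sqrt (\<Sum>m<K. (r m)\<^sup>2)"
    by simp
qed (use fractal_fixed_point(1)[OF fs] B(2) \<Lambda>_less_1 in auto)

end

theorem proposition6p13:
  fixes N :: nat and xs a c :: "nat \<Rightarrow> real" and \<alpha> :: "nat \<Rightarrow> real \<Rightarrow> real"
    and \<Lambda> :: real and fs :: "nat \<Rightarrow> real \<Rightarrow> real"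
  assumes "N \<ge> 2"
    and "strict_mono_on {0..N} xs"
    and "\<forall>n\<in>{1..N}. a n * xs 0 + c n = xs (n - 1) \<and> a n * xs N + c n = xs n"
    and "\<forall>n\<in>{1..N}. \<alpha> n \<in> borel_measurable (lebesgue_on {xs 0 .. xs N})"
    and "\<Lambda> < 1"
    and "AE y in lebesgue_on {xs 0 .. xs N}. \<forall>n\<in>{1..N}. \<bar>\<alpha> n y\<bar> \<le> \<Lambda>"
    and "\<forall>m. L2 {xs 0 .. xs N} (fs m)"
    and "Bessel {xs 0 .. xs N} fs"
  shows "Bessel {xs 0 .. xs N} (\<lambda>m. fractal N xs a c \<alpha> (fs m) (\<lambda>_. 0))"
proof -
  interpret affine_fractal N xs a c \<alpha> "max \<Lambda> 0"
    using assms(2-6) by unfold_locales (auto elim!: eventually_mono)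
  have fs: "square_integrable (lebesgue_on {xs 0 .. xs N}) (fs m)" for m
    using assms(7) by (simp add: L2_iff_square_integrable)
  from assms(8) obtain B where "0 < B" and B: "bessel_bound (lebesgue_on {xs 0 .. xs N}) fs B"
    by (auto simp: Bessel_iff_bessel_bound)
  have "bessel_bound (lebesgue_on {xs 0 .. xs N}) (\<lambda>m. fractal N xs a c \<alpha> (fs m) (\<lambda>_. 0))
      ((sqrt B / (1 - max \<Lambda> 0))\<^sup>2)"
    using bessel_bound_fractal[OF fs B] \<open>0 < B\<close> by simp
  moreover have "0 < (sqrt B / (1 - max \<Lambda> 0))\<^sup>2"
    using \<open>0 < B\<close> assms(5) by simp
  ultimately show ?thesis
    unfolding Bessel_iff_bessel_bound by blast
qed

end
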